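(* Let $F\subseteq P_{3,4}$ be an exposed face defined by a linear functional $L:H_4\to\mathbb R$ that is nonnegative on $P_{3,4}$ with $F=\ker L\cap P_{3,4}$. Let $B_L:H_2\times H_2\to\mathbb R$, $B_L(f,g)=L(fg)$ (a positive semidefinite symmetric bilinear form), and $\ker B_L=\{f\in H_2: B_L(f,g)=0\ \forall g\in H_2\}$. Then $\ker B_L=J_F$.
   Context: $H_k\subseteq\mathbb R[x,y,z]$: real ternary forms of degree $k$; $P_{3,4}=\{f\in H_4: f\ge0\text{ on }\mathbb P^2(\mathbb R)\}$. A face of $P_{3,4}$ is a convex subcone $F$ such that $a,b\in P_{3,4}$, $a+b\in F$ imply $a,b\in F$; it is exposed if $F=\ker L\cap P_{3,4}$ for a linear functional $L$ nonnegative on $P_{3,4}$. $J_F=\{q\in H_2: q^2\in F\}$. *)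

theory Defs
  imports "HOL-Analysis.Analysis"
begin

text \<open>Real ternary forms are represented by their polynomial functions
  R x R x R -> R (a real polynomial is determined by its function).\<close>

type_synonym form = "real \<Rightarrow> real \<Rightarrow> real \<Rightarrow> real"

definition H :: "nat \<Rightarrow> form set" where
  "H k = {f. \<exists>c :: nat \<Rightarrow> nat \<Rightarrow> real.
      f = (\<lambda>x y z. \<Sum>i\<le>k. \<Sum>j\<le>k - i. c i j * x ^ i * y ^ j * z ^ (k - i - j))}"

definition P34 :: "form set" where
  "P34 = {f \<in> H 4. \<forall>x y z. (x, y, z) \<noteq> (0, 0, 0) \<longrightarrow> 0 \<le> f x y z}"

definition linear_on_H4 :: "(form \<Rightarrow> real) \<Rightarrow> bool" where
  "linear_on_H4 L \<longleftrightarrow>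
     (\<forall>f \<in> H 4. \<forall>g \<in> H 4. L (\<lambda>x y z. f x y z + g x y z) = L f + L g) \<and>
     (\<forall>f \<in> H 4. \<forall>a::real. L (\<lambda>x y z. a * f x y z) = a * L f)"

definition face_of_functional :: "(form \<Rightarrow> real) \<Rightarrow> form set" where
  "face_of_functional L = {f \<in> P34. L f = 0}"

definition J :: "form set \<Rightarrow> form set" where
  "J F = {q \<in> H 2. (\<lambda>x y z. (q x y z) ^ 2) \<in> F}"

definition B :: "(form \<Rightarrow> real) \<Rightarrow> form \<Rightarrow> form \<Rightarrow> real" where
  "B L f g = L (\<lambda>x y z. f x y z * g x y z)"

definition kerB :: "(form \<Rightarrow> real) \<Rightarrow> form set" where
  "kerB L = {f \<in> H 2. \<forall>g \<in> H 2. B L f g = 0}"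

end

theory Submission
  imports Defs
begin

(* Since squares of quadratics are nonnegative quartics, B_L is positive semidefinite,
   and the statement is the familiar fact that for a positive semidefinite form the
   isotropic vectors (B_L(q,q) = 0) are exactly the radical.  One inclusion is trivial;
   for the other, expand 0 \<le> L((q - t g)^2) = -2t B_L(q,g) + t^2 B_L(g,g) and conclude
   B_L(q,g) = 0 from an elementary fact about real quadratics in t. *)

lemma H_zero: "(\<lambda>x y z. 0) \<in> H k"
  unfolding H_def by (intro CollectI exI[of _ "\<lambda>i j. 0"]) simp

lemma H_add:
  assumes "f \<in> H k" "g \<in> H k"
  shows "(\<lambda>x y z. f x y z + g x y z) \<in> H k"
proof -
  obtain c d where
    c: "f = (\<lambda>x y z. \<Sum>i\<le>k. \<Sum>j\<le>k - i. c i j * x ^ i * y ^ j * z ^ (k - i - j))" and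
    d: "g = (\<lambda>x y z. \<Sum>i\<le>k. \<Sum>j\<le>k - i. d i j * x ^ i * y ^ j * z ^ (k - i - j))"
    using assms unfolding H_def by blast
  show ?thesis unfolding H_def
    by (intro CollectI exI[of _ "\<lambda>i j. c i j + d i j"]) (simp add: c d distrib_right sum.distrib)
qed

lemma H_smult:
  assumes "f \<in> H k"
  shows "(\<lambda>x y z. a * f x y z) \<in> H k"
proof -
  obtain c where c: "f = (\<lambda>x y z. \<Sum>i\<le>k. \<Sum>j\<le>k - i. c i j * x ^ i * y ^ j * z ^ (k - i - j))"
    using assms unfolding H_def by blast
  show ?thesis unfolding H_def
    by (intro CollectI exI[of _ "\<lambda>i j. a * c i j"]) (simp add: c sum_distrib_left mult.assoc)
qed

lemma H_sum:
  assumes "finite S" "\<And>s. s \<in> S \<Longrightarrow> f s \<in> H k"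
  shows "(\<lambda>x y z. \<Sum>s\<in>S. f s x y z) \<in> H k"
  using assms
proof (induction S rule: finite_induct)
  case empty
  then show ?case using H_zero by simp
next
  case (insert a S)
  then have "(\<lambda>x y z. f a x y z + (\<Sum>s\<in>S. f s x y z)) \<in> H k"
    using H_add[of "f a" k "\<lambda>x y z. \<Sum>s\<in>S. f s x y z"] by simp
  then show ?case using insert.hyps by simp
qed

lemma H_monomial:
  assumes "i + j \<le> k"
  shows "(\<lambda>x y z. x ^ i * y ^ j * z ^ (k - i - j)) \<in> H k"
proof -
  define c where "c a b = (if a = i \<and> b = j then 1 else 0 :: real)" for a b
  have inner: "(\<Sum>b\<le>k - a. c a b * x ^ a * y ^ b * z ^ (k - a - b))
      = (if a = i then x ^ i * y ^ j * z ^ (k - i - j) else 0)" for a and x y z :: real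
    using assms by (cases "a = i") (simp_all add: c_def if_distrib[of "\<lambda>c. c * _"] cong: if_cong)
  have "(\<Sum>a\<le>k. \<Sum>b\<le>k - a. c a b * x ^ a * y ^ b * z ^ (k - a - b))
      = x ^ i * y ^ j * z ^ (k - i - j)" for x y z :: real
    unfolding inner using assms by simp
  then show ?thesis unfolding H_def by (intro CollectI exI[of _ c]) auto
qed

text \<open>The product of forms of degrees m and n is a form of degree m + n: expand the
  product into products of monomials, each of which is a scaled monomial of degree m + n.\<close>

lemma H_mult:
  assumes "f \<in> H m" "g \<in> H n"
  shows "(\<lambda>x y z. f x y z * g x y z) \<in> H (m + n)"
proof -
  obtain c d where
    c: "f = (\<lambda>x y z. \<Sum>i\<le>m. \<Sum>j\<le>m - i. c i j * x ^ i * y ^ j * z ^ (m - i - j))" and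
    d: "g = (\<lambda>x y z. \<Sum>i\<le>n. \<Sum>j\<le>n - i. d i j * x ^ i * y ^ j * z ^ (n - i - j))"
    using assms unfolding H_def by blast
  have term_in_H: "(\<lambda>x y z. (c i j * x ^ i * y ^ j * z ^ (m - i - j)) *
                            (d i' j' * x ^ i' * y ^ j' * z ^ (n - i' - j'))) \<in> H (m + n)"
    if "i + j \<le> m" "i' + j' \<le> n" for i j i' j'
  proof -
    have exps: "(m - i - j) + (n - i' - j') = m + n - (i + i') - (j + j')"
      using that by simp
    have "(\<lambda>x y z. (c i j * x ^ i * y ^ j * z ^ (m - i - j)) *
                      (d i' j' * x ^ i' * y ^ j' * z ^ (n - i' - j')))
        = (\<lambda>x y z. (c i j * d i' j') * (x ^ (i + i') * y ^ (j + j') * z ^ (m + n - (i + i') - (j + j'))))"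
      unfolding power_add exps[symmetric] by (intro ext) (simp only: mult_ac)
    also have "\<dots> \<in> H (m + n)"
      using that by (intro H_smult H_monomial) simp
    finally show ?thesis .
  qed
  have "(\<lambda>x y z. f x y z * g x y z) = (\<lambda>x y z. \<Sum>i\<le>m. \<Sum>j\<le>m - i. \<Sum>i'\<le>n. \<Sum>j'\<le>n - i'.
      (c i j * x ^ i * y ^ j * z ^ (m - i - j)) * (d i' j' * x ^ i' * y ^ j' * z ^ (n - i' - j')))"
    unfolding c d by (simp only: sum_distrib_right) (simp only: sum_distrib_left)
  also have "\<dots> \<in> H (m + n)"
    by (intro H_sum finite_atMost term_in_H) auto
  finally show ?thesis .
qed

lemma square_in_P34:
  assumes "q \<in> H 2"
  shows "(\<lambda>x y z. (q x y z) ^ 2) \<in> P34"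
  using H_mult[OF assms assms] unfolding P34_def by (simp add: power2_eq_square)

text \<open>If t^2 a - 2 t b is nonnegative for all real t, then b = 0: at t = b / (|a| + 1) the
  value is at most -2 t^2, forcing t = 0.  This is the core of Cauchy--Schwarz.\<close>

lemma quadratic_nonneg_imp_linear_coeff_zero:
  fixes a b :: real
  assumes nonneg: "\<And>t. 0 \<le> t\<^sup>2 * a - 2 * t * b"
  shows "b = 0"
proof -
  define t where "t = b / (\<bar>a\<bar> + 1)"
  have b_eq: "b = t * (\<bar>a\<bar> + 1)"
    unfolding t_def by (simp add: add_pos_nonneg)
  have "t\<^sup>2 * a - 2 * t * b = t\<^sup>2 * (a - 2 * \<bar>a\<bar> - 2)"
    unfolding b_eq by (simp add: algebra_simps power2_eq_square)
  also have "\<dots> \<le> t\<^sup>2 * (- 2)"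
    by (rule mult_left_mono) auto
  finally have "t\<^sup>2 * 2 \<le> 0"
    using nonneg[of t] by linarith
  then have "t = 0" by simp
  then show "b = 0" using b_eq by simp
qed

lemma L_square_difference:
  assumes lin: "linear_on_H4 L" and q: "q \<in> H 2" and g: "g \<in> H 2"
  shows "L (\<lambda>x y z. (q x y z - t * g x y z) ^ 2)
       = B L q q - 2 * t * B L q g + t\<^sup>2 * B L g g"
proof -
  have add: "L (\<lambda>x y z. u x y z + v x y z) = L u + L v" if "u \<in> H 4" "v \<in> H 4" for u v
    using lin that unfolding linear_on_H4_def by blast
  have smult: "L (\<lambda>x y z. c * u x y z) = c * L u" if "u \<in> H 4" for c u
    using lin that unfolding linear_on_H4_def by blast
  have prod: "(\<lambda>x y z. u x y z * v x y z) \<in> H 4" if "u \<in> H 2" "v \<in> H 2" for u v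
    using H_mult[OF that] by simp
  define Pqq Pqg Pgg where
    "Pqq = (\<lambda>x y z. q x y z * q x y z)" and
    "Pqg = (\<lambda>x y z. (- 2 * t) * (q x y z * g x y z))" and
    "Pgg = (\<lambda>x y z. t\<^sup>2 * (g x y z * g x y z))"
  have in_H4: "Pqq \<in> H 4" "Pqg \<in> H 4" "Pgg \<in> H 4"
    unfolding Pqq_def Pqg_def Pgg_def by (intro H_smult prod q g)+
  have "L (\<lambda>x y z. (q x y z - t * g x y z) ^ 2)
      = L (\<lambda>x y z. Pqq x y z + (Pqg x y z + Pgg x y z))"
    unfolding Pqq_def Pqg_def Pgg_def
    by (intro arg_cong[where f = L] ext) (simp add: power2_eq_square algebra_simps)
  also have "\<dots> = L Pqq + (L Pqg + L Pgg)"
    using add[OF in_H4(1) H_add[OF in_H4(2,3)]] add[OF in_H4(2,3)] by simp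
  also have "\<dots> = B L q q - 2 * t * B L q g + t\<^sup>2 * B L g g"
  proof -
    have "L Pqg = - 2 * t * B L q g" "L Pgg = t\<^sup>2 * B L g g"
      unfolding Pqg_def Pgg_def B_def by (intro smult prod q g)+
    then show ?thesis unfolding Pqq_def B_def by simp
  qed
  finally show ?thesis .
qed

text \<open>Since L is nonnegative on squares, B_L is positive semidefinite, so every isotropic
  quadratic (B_L(q,q) = 0) lies in the kernel of B_L.\<close>

lemma isotropic_in_kerB:
  assumes lin: "linear_on_H4 L" and psd: "\<forall>f \<in> P34. 0 \<le> L f"
    and q: "q \<in> H 2" and isotropic: "B L q q = 0"
  shows "q \<in> kerB L"
  unfolding kerB_def
proof (intro CollectI conjI ballI q)
  fix g assume g: "g \<in> H 2"
  have "0 \<le> t\<^sup>2 * B L g g - 2 * t * B L q g" for t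
  proof -
    have "(\<lambda>x y z. q x y z - t * g x y z) \<in> H 2"
      using H_add[OF q H_smult[OF g, of "- t"]] by simp
    then have "0 \<le> L (\<lambda>x y z. (q x y z - t * g x y z) ^ 2)"
      using psd square_in_P34 by blast
    then show ?thesis
      unfolding L_square_difference[OF lin q g] isotropic by simp
  qed
  then show "B L q g = 0"
    by (rule quadratic_nonneg_imp_linear_coeff_zero)
qed

lemma J_face_of_functional:
  "J (face_of_functional L) = {q \<in> H 2. B L q q = 0}"
  unfolding J_def face_of_functional_def B_def
  using square_in_P34 by (auto simp: power2_eq_square)

theorem mainTheorem16:
  fixes L :: "form \<Rightarrow> real" and F :: "form set"
  assumes "linear_on_H4 L"
    and "\<forall>f \<in> P34. 0 \<le> L f"
    and "F = face_of_functional L"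
  shows "kerB L = J F"
proof
  show "kerB L \<subseteq> J F"
    unfolding assms(3) J_face_of_functional kerB_def by blast
  show "J F \<subseteq> kerB L"
    unfolding assms(3) J_face_of_functional
    using isotropic_in_kerB[OF assms(1,2)] by blast
qed

end
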